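(* Let $n,m\in\mathbb N$, $d:=\min\{n,m\}$, fix $\alpha\in[1,d]$ and let $\Phi:\mathbb M_n\to\mathbb M_m$ be Hermitian-preserving. (a) For all unitaries $U\in\mathbb M_m$, $V\in\mathbb M_n$: $\Phi\in\mathsf P_\alpha\iff\mathrm{Ad}_U\circ\Phi\circ\mathrm{Ad}_V\in\mathsf P_\alpha$, and $\Phi\in\mathsf{SP}_\alpha\iff\mathrm{Ad}_U\circ\Phi\circ\mathrm{Ad}_V\in\mathsf{SP}_\alpha$, where $\mathrm{Ad}_U(Y)=UYU^\ast$. (b) Membership of $\Phi$ in $\mathsf P_\alpha$ (and in $\mathsf{SP}_\alpha$) does not depend on the choice of matrix units used to define the Choi matrix: for any orthonormal basis $\{v_i\}$ of $\mathbb C^n$, with $E'_{ij}:=v_iv_j^\ast$ and $C'_\Phi:=\sum_{i,j}E'_{ij}\otimes\Phi(E'_{ij})$, one has $C'_\Phi\in\mathsf{BP}_\alpha\iff C_\Phi\in\mathsf{BP}_\alpha$ and $C'_\Phi\in\mathsf K_\alpha\iff C_\Phi\in\mathsf K_\alpha$.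
   Context: $C_\Phi:=\sum_{i,j=1}^nE_{ij}\otimes\Phi(E_{ij})$ with $E_{ij}$ the standard matrix units of $\mathbb M_n$. For $\psi=\sum_{i,j}a_{ij}e_i\otimes f_j\in\mathbb C^n\otimes\mathbb C^m$, its Schmidt coefficients $s_1(\psi)\ge\dots\ge s_d(\psi)\ge0$ are the singular values of $[a_{ij}]$. For $\alpha\in[1,d]$ with $k=\lfloor\alpha\rfloor$, $\theta=\alpha-k$, $r=\lceil\alpha\rceil$, a unit vector $\psi$ is $\alpha$-admissible if $s_j(\psi)=0$ for $j\ge r+1$ and, when $\theta>0$, $s_{k+1}(\psi)\le\frac\theta k\sum_{j=1}^ks_j(\psi)$; $\mathcal V_\alpha$ is the set of these. $\mathsf K_\alpha$ is the closure of the convex cone generated by $\{\psi\psi^\ast:\psi\in\mathcal V_\alpha\}$; $\mathsf{BP}_\alpha:=\{W \text{ Hermitian}:\langle\psi,W\psi\rangle\ge0\ \forall\psi\in\mathcal V_\alpha\}$. A Hermitian-preserving $\Phi$ is in $\mathsf P_\alpha$ if $C_\Phi\in\mathsf{BP}_\alpha$ and in $\mathsf{SP}_\alpha$ if $C_\Phi\in\mathsf K_\alpha$. *)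

theory Defs
  imports "Jordan_Normal_Form.Char_Poly" "HOL-Computational_Algebra.Polynomial"
begin

definition cadj :: "complex mat \<Rightarrow> complex mat" where
  "cadj A = mat (dim_col A) (dim_row A) (\<lambda>(i,j). cnj (A $$ (j,i)))"

definition hermitian_mat :: "nat \<Rightarrow> complex mat \<Rightarrow> bool" where
  "hermitian_mat N A \<longleftrightarrow> A \<in> carrier_mat N N \<and> cadj A = A"

definition unitary_mat :: "nat \<Rightarrow> complex mat \<Rightarrow> bool" where
  "unitary_mat N U \<longleftrightarrow> U \<in> carrier_mat N N \<and> U * cadj U = 1\<^sub>m N \<and> cadj U * U = 1\<^sub>m N"

definition Ad :: "complex mat \<Rightarrow> complex mat \<Rightarrow> complex mat" where
  "Ad U Y = U * Y * cadj U"

(* Kronecker product, with e_i \<otimes> f_j at index i * m + j *)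
definition kron :: "complex mat \<Rightarrow> complex mat \<Rightarrow> complex mat" where
  "kron A B = mat (dim_row A * dim_row B) (dim_col A * dim_col B)
     (\<lambda>(i,j). A $$ (i div dim_row B, j div dim_col B) * B $$ (i mod dim_row B, j mod dim_col B))"

definition outer :: "complex vec \<Rightarrow> complex vec \<Rightarrow> complex mat" where
  "outer v w = mat (dim_vec v) (dim_vec w) (\<lambda>(i,j). v $ i * cnj (w $ j))"

definition cinner :: "complex vec \<Rightarrow> complex vec \<Rightarrow> complex" where
  "cinner v w = (\<Sum>i<dim_vec w. cnj (v $ i) * w $ i)"

definition matunit :: "nat \<Rightarrow> nat \<Rightarrow> nat \<Rightarrow> complex mat" where
  "matunit n i j = mat n n (\<lambda>(a,b). if a = i \<and> b = j then 1 else 0)"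

definition linear_map :: "nat \<Rightarrow> nat \<Rightarrow> (complex mat \<Rightarrow> complex mat) \<Rightarrow> bool" where
  "linear_map n m \<Phi> \<longleftrightarrow>
     (\<forall>A \<in> carrier_mat n n. \<Phi> A \<in> carrier_mat m m) \<and>
     (\<forall>A \<in> carrier_mat n n. \<forall>B \<in> carrier_mat n n. \<Phi> (A + B) = \<Phi> A + \<Phi> B) \<and>
     (\<forall>A \<in> carrier_mat n n. \<forall>c. \<Phi> (c \<cdot>\<^sub>m A) = c \<cdot>\<^sub>m \<Phi> A)"

definition hermitian_preserving :: "nat \<Rightarrow> nat \<Rightarrow> (complex mat \<Rightarrow> complex mat) \<Rightarrow> bool" where
  "hermitian_preserving n m \<Phi> \<longleftrightarrow> (\<forall>A. hermitian_mat n A \<longrightarrow> hermitian_mat m (\<Phi> A))"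

definition gen_choi :: "nat \<Rightarrow> nat \<Rightarrow> (nat \<Rightarrow> nat \<Rightarrow> complex mat) \<Rightarrow> (complex mat \<Rightarrow> complex mat) \<Rightarrow> complex mat" where
  "gen_choi n m E \<Phi> = mat (n * m) (n * m)
     (\<lambda>(a,b). \<Sum>i<n. \<Sum>j<n. kron (E i j) (\<Phi> (E i j)) $$ (a,b))"

definition choi :: "nat \<Rightarrow> nat \<Rightarrow> (complex mat \<Rightarrow> complex mat) \<Rightarrow> complex mat" where
  "choi n m \<Phi> = gen_choi n m (matunit n) \<Phi>"

(* coefficient matrix [a_ij] of psi = sum a_ij e_i \<otimes> f_j *)
definition coeff_mat :: "nat \<Rightarrow> nat \<Rightarrow> complex vec \<Rightarrow> complex mat" where
  "coeff_mat n m \<psi> = mat n m (\<lambda>(i,j). \<psi> $ (i * m + j))"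

(* Singular values of [a_ij] in decreasing order: square roots of the eigenvalues
   (with multiplicity) of A A^*; the j-th Schmidt coefficient s_j is entry (j-1). *)
definition schmidt :: "nat \<Rightarrow> nat \<Rightarrow> complex vec \<Rightarrow> real list" where
  "schmidt n m \<psi> = (let A = coeff_mat n m \<psi> in
     rev (map sqrt (sorted_list_of_multiset (image_mset Re (proots (char_poly (A * cadj A)))))))"

definition schmidt_coeff :: "nat \<Rightarrow> nat \<Rightarrow> complex vec \<Rightarrow> nat \<Rightarrow> real" where
  "schmidt_coeff n m \<psi> j = schmidt n m \<psi> ! (j - 1)"

definition unit_vec :: "nat \<Rightarrow> complex vec \<Rightarrow> bool" where
  "unit_vec N \<psi> \<longleftrightarrow> \<psi> \<in> carrier_vec N \<and> (\<Sum>i<N. (cmod (\<psi> $ i))\<^sup>2) = 1"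

definition admissible :: "nat \<Rightarrow> nat \<Rightarrow> real \<Rightarrow> complex vec \<Rightarrow> bool" where
  "admissible n m \<alpha> \<psi> \<longleftrightarrow>
     (let k = nat \<lfloor>\<alpha>\<rfloor>; \<theta> = \<alpha> - real k; r = nat \<lceil>\<alpha>\<rceil>; d = min n m;
          s = schmidt_coeff n m \<psi> in
      unit_vec (n * m) \<psi> \<and>
      (\<forall>j. r + 1 \<le> j \<and> j \<le> d \<longrightarrow> s j = 0) \<and>
      (\<theta> > 0 \<longrightarrow> s (k + 1) \<le> \<theta> / real k * (\<Sum>j=1..k. s j)))"

definition V_adm :: "nat \<Rightarrow> nat \<Rightarrow> real \<Rightarrow> complex vec set" where
  "V_adm n m \<alpha> = {\<psi>. admissible n m \<alpha> \<psi>}"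

definition cone_gen :: "nat \<Rightarrow> nat \<Rightarrow> real \<Rightarrow> complex mat set" where
  "cone_gen n m \<alpha> = {X. \<exists>K (c :: nat \<Rightarrow> real) \<psi>s.
      (\<forall>l<K. c l \<ge> 0 \<and> \<psi>s l \<in> V_adm n m \<alpha>) \<and>
      X = mat (n * m) (n * m) (\<lambda>(a,b). \<Sum>l<K. complex_of_real (c l) * outer (\<psi>s l) (\<psi>s l) $$ (a,b))}"

(* K_alpha: topological closure (entrywise, in M_{nm}) of the generated cone *)
definition K_cone :: "nat \<Rightarrow> nat \<Rightarrow> real \<Rightarrow> complex mat set" where
  "K_cone n m \<alpha> = {W. W \<in> carrier_mat (n * m) (n * m) \<and>
     (\<forall>\<epsilon>>0. \<exists>X \<in> cone_gen n m \<alpha>. \<forall>a < n * m. \<forall>b < n * m. cmod (X $$ (a,b) - W $$ (a,b)) < \<epsilon>)}"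

definition BP :: "nat \<Rightarrow> nat \<Rightarrow> real \<Rightarrow> complex mat set" where
  "BP n m \<alpha> = {W. hermitian_mat (n * m) W \<and>
     (\<forall>\<psi> \<in> V_adm n m \<alpha>. Re (cinner \<psi> (W *\<^sub>v \<psi>)) \<ge> 0)}"

definition in_P :: "nat \<Rightarrow> nat \<Rightarrow> real \<Rightarrow> (complex mat \<Rightarrow> complex mat) \<Rightarrow> bool" where
  "in_P n m \<alpha> \<Phi> \<longleftrightarrow> hermitian_preserving n m \<Phi> \<and> choi n m \<Phi> \<in> BP n m \<alpha>"

definition in_SP :: "nat \<Rightarrow> nat \<Rightarrow> real \<Rightarrow> (complex mat \<Rightarrow> complex mat) \<Rightarrow> bool" where
  "in_SP n m \<alpha> \<Phi> \<longleftrightarrow> hermitian_preserving n m \<Phi> \<and> choi n m \<Phi> \<in> K_cone n m \<alpha>"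

end

theory Submission
  imports Defs
begin

text \<open>
  Both parts reduce to one invariance: BP_alpha and K_alpha are mapped onto themselves by
  W \<mapsto> (A \<otimes> B) W (A \<otimes> B)^* for unitaries A and B. The coefficient matrix of
  (A \<otimes> B) psi is A [a_ij] B^T, which has the singular values of [a_ij]; so A \<otimes> B
  preserves the admissible vectors, hence the cone they generate, its closure K_alpha and the
  dual cone BP_alpha. By linearity of Phi, the Choi matrix of Ad_U \<circ> Phi \<circ> Ad_V is C_Phi
  conjugated by V^T \<otimes> 1 and then by 1 \<otimes> U. Since v_i v_j^* = Ad_G(E_ij) for the unitary G
  with columns v_i, the matrix C'_Phi is C_Phi conjugated by G^T \<otimes> 1 and then by G \<otimes> 1.
\<close>

section \<open>Block indices\<close>

lemma sum_lessThan_mult: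
  fixes f :: "nat \<Rightarrow> 'a::comm_monoid_add"
  shows "(\<Sum>i<n*m. f i) = (\<Sum>p<n. \<Sum>q<m. f (p*m+q))"
proof -
  have "(\<Sum>i<n*m. f i) = (\<Sum>p<n. \<Sum>i\<in>{p*m..<p*m+m}. f i)"
    by (rule sum.nat_group[symmetric])
  also have "\<dots> = (\<Sum>p<n. \<Sum>q<m. f (p*m+q))"
    by (simp add: sum.atLeastLessThan_shift_0 atLeast0LessThan add.commute)
  finally show ?thesis .
qed

lemma block_index_less: "p < n \<Longrightarrow> q < m \<Longrightarrow> p*m+q < n*(m::nat)"
  using mult_le_mono1[of "Suc p" n m] by simp

lemma block_index_cases:
  assumes "i < n*m"
  obtains p q where "i = p*m+q" "p < n" "q < (m::nat)"
proof
  show "i = (i div m)*m + i mod m" by simp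
  show "i div m < n" using assms by (simp add: less_mult_imp_div_less)
  show "i mod m < m" using assms by (cases "m = 0") auto
qed

lemma block_index_eq_iff:
  assumes "q < m" and "s < m"
  shows "p*m+q = r*m+s \<longleftrightarrow> p = r \<and> q = (s::nat)"
proof -
  have "(p*m+q) div m = p" "(p*m+q) mod m = q" "(r*m+s) div m = r" "(r*m+s) mod m = s"
    using assms by simp_all
  then show ?thesis by metis
qed

lemma eq_mat_blockI:
  assumes "A \<in> carrier_mat (n*m) (n*m)" and "B \<in> carrier_mat (n*m) (n*m)"
    and "\<And>p q r s. p < n \<Longrightarrow> q < m \<Longrightarrow> r < n \<Longrightarrow> s < m \<Longrightarrow>
           A $$ (p*m+q, r*m+s) = B $$ (p*m+q, r*m+s)"
  shows "A = B"
proof (rule eq_matI)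
  fix i j assume "i < dim_row B" "j < dim_col B"
  then have "i < n*m" "j < n*m" using assms(2) by auto
  then show "A $$ (i,j) = B $$ (i,j)"
    by (elim block_index_cases) (simp add: assms(3))
qed (use assms in auto)

lemma sum2_delta:
  fixes f :: "nat \<Rightarrow> nat \<Rightarrow> 'a::comm_monoid_add"
  assumes "i < n" and "j < n"
  shows "(\<Sum>x<n. \<Sum>y<n. if x = i \<and> y = j then f x y else 0) = f i j"
    and "(\<Sum>x<n. \<Sum>y<n. if i = x \<and> j = y then f x y else 0) = f i j"
proof -
  have "(\<Sum>y<n. if x = i \<and> y = j then f x y else 0) = (if x = i then f x j else 0)" for x
    using assms by (cases "x = i") simp_all
  then show "(\<Sum>x<n. \<Sum>y<n. if x = i \<and> y = j then f x y else 0) = f i j"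
    using assms by simp
  then show "(\<Sum>x<n. \<Sum>y<n. if i = x \<and> j = y then f x y else 0) = f i j"
    by (simp add: eq_commute)
qed

lemma sum2_one_mat_index:
  assumes "q < m" and "s < m"
  shows "(\<Sum>x<m. \<Sum>y<m. 1\<^sub>m m $$ (q,x) * cnj (1\<^sub>m m $$ (s,y)) * F x y) = (F q s :: complex)"
proof -
  have "(\<Sum>x<m. \<Sum>y<m. 1\<^sub>m m $$ (q,x) * cnj (1\<^sub>m m $$ (s,y)) * F x y)
      = (\<Sum>x<m. \<Sum>y<m. if y = s then (if x = q then F x y else 0) else 0)"
    using assms by (intro sum.cong refl) auto
  then show ?thesis using assms by simp
qed

section \<open>Conjugate transpose, Kronecker products and unitaries\<close>

lemma cadj_carrier_mat: "A \<in> carrier_mat r c \<Longrightarrow> cadj A \<in> carrier_mat c r"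
  by (auto simp: cadj_def)

lemma cadj_dim [simp]: "dim_row (cadj A) = dim_col A" "dim_col (cadj A) = dim_row A"
  by (simp_all add: cadj_def)

lemma cadj_index [simp]: "i < dim_col A \<Longrightarrow> j < dim_row A \<Longrightarrow> cadj A $$ (i,j) = cnj (A $$ (j,i))"
  by (simp add: cadj_def)

lemma cadj_cadj [simp]: "cadj (cadj A) = A"
  by (rule eq_matI) auto

lemma cadj_one [simp]: "cadj (1\<^sub>m n) = 1\<^sub>m n"
  by (rule eq_matI) auto

lemma cadj_mult: "A \<in> carrier_mat a b \<Longrightarrow> B \<in> carrier_mat b c \<Longrightarrow> cadj (A * B) = cadj B * cadj A"
  by (rule eq_matI) (auto simp: scalar_prod_def mult.commute)

lemma cadj_transpose: "cadj (transpose_mat A) = transpose_mat (cadj A)"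
  by (rule eq_matI) auto

lemma Ad_carrier_mat: "U \<in> carrier_mat m n \<Longrightarrow> Ad U X \<in> carrier_mat m m"
  unfolding Ad_def by (rule carrier_matI) auto

lemma Ad_index:
  assumes "T \<in> carrier_mat M N" and "X \<in> carrier_mat N N" and "i < M" and "j < M"
  shows "Ad T X $$ (i,j) = (\<Sum>x<N. \<Sum>y<N. T $$ (i,x) * X $$ (x,y) * cnj (T $$ (j,y)))"
proof -
  have "Ad T X $$ (i,j) = (\<Sum>y<N. (\<Sum>x<N. T $$ (i,x) * X $$ (x,y)) * cnj (T $$ (j,y)))"
    using assms by (simp add: Ad_def scalar_prod_def atLeast0LessThan)
  also have "\<dots> = (\<Sum>y<N. \<Sum>x<N. T $$ (i,x) * X $$ (x,y) * cnj (T $$ (j,y)))"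
    by (simp add: sum_distrib_right)
  also have "\<dots> = (\<Sum>x<N. \<Sum>y<N. T $$ (i,x) * X $$ (x,y) * cnj (T $$ (j,y)))"
    by (rule sum.swap)
  finally show ?thesis .
qed

lemma hermitian_mat_Ad:
  assumes "hermitian_mat N A" and P: "P \<in> carrier_mat M N"
  shows "hermitian_mat M (Ad P A)"
proof -
  have A: "A \<in> carrier_mat N N" and "cadj A = A" using assms(1) unfolding hermitian_mat_def by auto
  have cP: "cadj P \<in> carrier_mat N M" using P by (rule cadj_carrier_mat)
  have "cadj (P * A * cadj P) = P * (A * cadj P)"
    using cadj_mult[OF mult_carrier_mat[OF P A] cP] cadj_mult[OF P A] \<open>cadj A = A\<close> by simp
  also have "\<dots> = P * A * cadj P" using assoc_mult_mat[OF P A cP] by simp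
  finally show ?thesis unfolding hermitian_mat_def Ad_def using P A cP by simp
qed

lemma kron_dim [simp]:
  "dim_row (kron A B) = dim_row A * dim_row B" "dim_col (kron A B) = dim_col A * dim_col B"
  by (simp_all add: kron_def)

lemma kron_carrier_mat:
  "A \<in> carrier_mat a b \<Longrightarrow> B \<in> carrier_mat p q \<Longrightarrow> kron A B \<in> carrier_mat (a*p) (b*q)"
  by (simp add: kron_def)

lemma kron_index:
  assumes "A \<in> carrier_mat a b" and "B \<in> carrier_mat p q"
    and "i < a" and "j < b" and "k < p" and "l < q"
  shows "kron A B $$ (i*p+k, j*q+l) = A $$ (i,j) * B $$ (k,l)"
  using assms block_index_less[of i a k p] block_index_less[of j b l q] by (simp add: kron_def)

lemma kron_mult:
  assumes A: "A \<in> carrier_mat a b" and C: "C \<in> carrier_mat b c"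
    and B: "B \<in> carrier_mat p q" and D: "D \<in> carrier_mat q r"
  shows "kron A B * kron C D = kron (A * C) (B * D)"
proof (rule eq_matI)
  fix i j assume "i < dim_row (kron (A * C) (B * D))" "j < dim_col (kron (A * C) (B * D))"
  then have "i < a*p" "j < c*r" using A B C D by (simp_all add: kron_def)
  then obtain i1 i2 j1 j2 where ij: "i = i1*p+i2" "j = j1*r+j2"
    and less: "i1 < a" "i2 < p" "j1 < c" "j2 < r"
    by (elim block_index_cases)
  have "(kron A B * kron C D) $$ (i,j) = (\<Sum>k<b*q. kron A B $$ (i,k) * kron C D $$ (k,j))"
    using less A B C D by (simp add: ij kron_def scalar_prod_def atLeast0LessThan block_index_less)
  also have "\<dots> = (\<Sum>k<b. \<Sum>l<q. (A $$ (i1,k) * C $$ (k,j1)) * (B $$ (i2,l) * D $$ (l,j2)))"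
    unfolding sum_lessThan_mult ij using less A B C D
    by (intro sum.cong refl) (simp add: kron_index mult_ac)
  also have "\<dots> = kron (A * C) (B * D) $$ (i,j)"
    using less A B C D
    by (simp add: ij kron_index[of _ a c _ p r] scalar_prod_def atLeast0LessThan sum_product)
  finally show "(kron A B * kron C D) $$ (i,j) = kron (A * C) (B * D) $$ (i,j)" .
qed (use A B C D in \<open>simp_all add: kron_def\<close>)

lemma cadj_kron: "cadj (kron A B) = kron (cadj A) (cadj B)"
proof (rule eq_matI)
  fix i j assume "i < dim_row (kron (cadj A) (cadj B))" "j < dim_col (kron (cadj A) (cadj B))"
  then have "i < dim_col A * dim_col B" "j < dim_row A * dim_row B" by (simp_all add: kron_def)
  then obtain i1 i2 j1 j2 where ij: "i = i1 * dim_col B + i2" "j = j1 * dim_row B + j2"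
    and less: "i1 < dim_col A" "i2 < dim_col B" "j1 < dim_row A" "j2 < dim_row B"
    by (elim block_index_cases)
  have A: "A \<in> carrier_mat (dim_row A) (dim_col A)" and B: "B \<in> carrier_mat (dim_row B) (dim_col B)"
    by auto
  have "cadj (kron A B) $$ (i,j) = cnj (kron A B $$ (j,i))"
    using less by (simp add: ij block_index_less)
  also have "\<dots> = kron (cadj A) (cadj B) $$ (i,j)"
    using less by (simp add: ij kron_index[OF A B] kron_index[OF cadj_carrier_mat[OF A] cadj_carrier_mat[OF B]])
  finally show "cadj (kron A B) $$ (i,j) = kron (cadj A) (cadj B) $$ (i,j)" .
qed (simp_all add: kron_def)

lemma kron_one: "kron (1\<^sub>m a) (1\<^sub>m p) = 1\<^sub>m (a*p)"
proof (rule eq_mat_blockI)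
  fix i k j l assume "i < a" "k < p" "j < a" "l < p"
  then show "kron (1\<^sub>m a) (1\<^sub>m p) $$ (i*p+k, j*p+l) = 1\<^sub>m (a*p) $$ (i*p+k, j*p+l)"
    by (simp add: kron_index[of _ a a _ p p] block_index_less block_index_eq_iff)
qed (simp_all add: kron_carrier_mat)

lemma unitary_mat_carrier: "unitary_mat N U \<Longrightarrow> U \<in> carrier_mat N N"
  by (simp add: unitary_mat_def)

lemma unitary_one: "unitary_mat N (1\<^sub>m N)"
  by (simp add: unitary_mat_def)

lemma unitary_cadj: "unitary_mat N U \<Longrightarrow> unitary_mat N (cadj U)"
  by (auto simp: unitary_mat_def cadj_carrier_mat)

lemma unitary_transpose:
  assumes "unitary_mat N U"
  shows "unitary_mat N (transpose_mat U)"
proof -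
  have U: "U \<in> carrier_mat N N" and cU: "cadj U \<in> carrier_mat N N"
    and "U * cadj U = 1\<^sub>m N" "cadj U * U = 1\<^sub>m N"
    using assms by (auto simp: unitary_mat_def cadj_carrier_mat)
  then show ?thesis
    by (simp add: unitary_mat_def cadj_transpose transpose_mult[symmetric])
qed

lemma unitary_kron:
  assumes A: "unitary_mat a A" and B: "unitary_mat p B"
  shows "unitary_mat (a*p) (kron A B)"
proof -
  have "A \<in> carrier_mat a a" "cadj A \<in> carrier_mat a a" "B \<in> carrier_mat p p" "cadj B \<in> carrier_mat p p"
    using A B by (auto simp: unitary_mat_def cadj_carrier_mat)
  then show ?thesis
    using A B by (simp add: unitary_mat_def kron_carrier_mat cadj_kron kron_mult kron_one)
qed

section \<open>Local unitaries preserve admissible vectors\<close>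

lemma cinner_mult_mat_vec:
  assumes A: "A \<in> carrier_mat r c" and x: "x \<in> carrier_vec r" and y: "y \<in> carrier_vec c"
  shows "cinner x (A *\<^sub>v y) = cinner (cadj A *\<^sub>v x) y"
proof -
  have "cinner x (A *\<^sub>v y) = (\<Sum>i<r. \<Sum>j<c. cnj (x $ i) * A $$ (i,j) * y $ j)"
    using A x y by (simp add: cinner_def scalar_prod_def atLeast0LessThan sum_distrib_left mult.assoc)
  also have "\<dots> = (\<Sum>j<c. \<Sum>i<r. cnj (x $ i) * A $$ (i,j) * y $ j)"
    by (rule sum.swap)
  also have "\<dots> = cinner (cadj A *\<^sub>v x) y"
    using A x y by (simp add: cinner_def scalar_prod_def atLeast0LessThan sum_distrib_left sum_distrib_right mult_ac)
  finally show ?thesis .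
qed

lemma unit_vec_iff_cinner: "unit_vec N v \<longleftrightarrow> v \<in> carrier_vec N \<and> cinner v v = 1"
proof -
  have "cnj z * z = of_real ((cmod z)\<^sup>2)" for z
    by (simp only: complex_norm_square mult.commute)
  then have "cinner v v = of_real (\<Sum>i<dim_vec v. (cmod (v $ i))\<^sup>2)"
    by (simp add: cinner_def)
  then show ?thesis
    unfolding unit_vec_def by (metis carrier_vecD of_real_eq_1_iff)
qed

lemma unit_vec_unitary_mult:
  assumes T: "unitary_mat N T" and v: "unit_vec N v"
  shows "unit_vec N (T *\<^sub>v v)"
proof -
  have Tc: "T \<in> carrier_mat N N" and "cadj T * T = 1\<^sub>m N" using T by (auto simp: unitary_mat_def)
  have vc: "v \<in> carrier_vec N" and "cinner v v = 1" using v by (auto simp: unit_vec_iff_cinner)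
  have "cinner (T *\<^sub>v v) (T *\<^sub>v v) = cinner ((cadj T * T) *\<^sub>v v) v"
    using cinner_mult_mat_vec[OF Tc _ vc, of "T *\<^sub>v v"] Tc vc cadj_carrier_mat[OF Tc] by simp
  also have "\<dots> = 1" using \<open>cadj T * T = 1\<^sub>m N\<close> \<open>cinner v v = 1\<close> vc by simp
  finally show ?thesis using Tc vc by (simp add: unit_vec_iff_cinner)
qed

lemma coeff_mat_kron_mult_vec:
  assumes A: "A \<in> carrier_mat n n" and B: "B \<in> carrier_mat m m" and v: "v \<in> carrier_vec (n*m)"
  shows "coeff_mat n m (kron A B *\<^sub>v v) = A * coeff_mat n m v * transpose_mat B"
proof (rule eq_matI)
  fix i j assume "i < dim_row (A * coeff_mat n m v * transpose_mat B)"
    "j < dim_col (A * coeff_mat n m v * transpose_mat B)"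
  then have i: "i < n" and j: "j < m" using A B by (auto simp: coeff_mat_def)
  have "coeff_mat n m (kron A B *\<^sub>v v) $$ (i,j) = (\<Sum>x<n*m. kron A B $$ (i*m+j, x) * v $ x)"
    using i j A B v by (simp add: coeff_mat_def scalar_prod_def atLeast0LessThan block_index_less)
  also have "\<dots> = (\<Sum>k<n. \<Sum>l<m. A $$ (i,k) * B $$ (j,l) * v $ (k*m+l))"
    unfolding sum_lessThan_mult using i j by (simp add: kron_index[OF A B])
  also have "\<dots> = (\<Sum>l<m. \<Sum>k<n. A $$ (i,k) * B $$ (j,l) * v $ (k*m+l))"
    by (rule sum.swap)
  also have "\<dots> = (A * coeff_mat n m v * transpose_mat B) $$ (i,j)"
    using i j A B by (simp add: coeff_mat_def scalar_prod_def atLeast0LessThan sum_distrib_left sum_distrib_right mult_ac)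
  finally show "coeff_mat n m (kron A B *\<^sub>v v) $$ (i,j) = (A * coeff_mat n m v * transpose_mat B) $$ (i,j)" .
qed (use A B in \<open>simp_all add: coeff_mat_def\<close>)

lemma schmidt_kron_mult_vec:
  assumes A: "unitary_mat n A" and B: "unitary_mat m B" and v: "v \<in> carrier_vec (n*m)"
  shows "schmidt n m (kron A B *\<^sub>v v) = schmidt n m v"
proof -
  define M where "M = coeff_mat n m v"
  define P where "P = transpose_mat B"
  have Ac: "A \<in> carrier_mat n n" and cA: "cadj A \<in> carrier_mat n n"
    and A1: "A * cadj A = 1\<^sub>m n" "cadj A * A = 1\<^sub>m n"
    using A by (auto simp: unitary_mat_def cadj_carrier_mat)
  have Bc: "B \<in> carrier_mat m m" using B by (simp add: unitary_mat_def)
  have P: "P \<in> carrier_mat m m" and cP: "cadj P \<in> carrier_mat m m" and P1: "P * cadj P = 1\<^sub>m m"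
    using unitary_transpose[OF B] by (auto simp: P_def unitary_mat_def)
  have M: "M \<in> carrier_mat n m" and cM: "cadj M \<in> carrier_mat m n"
    by (simp_all add: M_def coeff_mat_def cadj_carrier_mat)
  have cMA: "cadj M * cadj A \<in> carrier_mat m n" using cM cA by simp
  let ?M' = "coeff_mat n m (kron A B *\<^sub>v v)"
  have "?M' * cadj ?M' = A * M * P * (cadj P * (cadj M * cadj A))"
    unfolding coeff_mat_kron_mult_vec[OF Ac Bc v] M_def[symmetric] P_def[symmetric]
      cadj_mult[OF mult_carrier_mat[OF Ac M] P] cadj_mult[OF Ac M] ..
  also have "\<dots> = A * M * (P * cadj P * (cadj M * cadj A))"
    using assoc_mult_mat[OF mult_carrier_mat[OF Ac M] P mult_carrier_mat[OF cP cMA]]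
      assoc_mult_mat[OF P cP cMA] by simp
  also have "\<dots> = A * (M * cadj M * cadj A)"
    using assoc_mult_mat[OF Ac M cMA] assoc_mult_mat[OF M cM cA] left_mult_one_mat[OF cMA] by (simp add: P1)
  also have "\<dots> = A * (M * cadj M) * cadj A"
    by (rule assoc_mult_mat[OF Ac mult_carrier_mat[OF M cM] cA, symmetric])
  finally have "?M' * cadj ?M' = A * (M * cadj M) * cadj A" .
  moreover have "similar_mat (A * (M * cadj M) * cadj A) (M * cadj M)"
    by (rule similar_matI[where P = A and Q = "cadj A" and n = n])
      (use Ac cA A1 mult_carrier_mat[OF M cM] in \<open>simp_all add: mult_carrier_mat\<close>)
  ultimately have "char_poly (?M' * cadj ?M') = char_poly (M * cadj M)"
    by (simp only: char_poly_similar)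
  then show ?thesis
    unfolding schmidt_def Let_def M_def by (simp only:)
qed

lemma V_adm_carrier: "\<psi> \<in> V_adm n m \<alpha> \<Longrightarrow> \<psi> \<in> carrier_vec (n*m)"
  by (simp add: V_adm_def admissible_def Let_def unit_vec_def)

lemma V_adm_kron_mult_vec:
  assumes A: "unitary_mat n A" and B: "unitary_mat m B" and \<psi>: "\<psi> \<in> V_adm n m \<alpha>"
  shows "kron A B *\<^sub>v \<psi> \<in> V_adm n m \<alpha>"
proof -
  have "unit_vec (n*m) \<psi>" using \<psi> by (simp add: V_adm_def admissible_def Let_def)
  then have "unit_vec (n*m) (kron A B *\<^sub>v \<psi>)" by (rule unit_vec_unitary_mult[OF unitary_kron[OF A B]])
  moreover have "schmidt_coeff n m (kron A B *\<^sub>v \<psi>) = schmidt_coeff n m \<psi>"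
    unfolding schmidt_coeff_def schmidt_kron_mult_vec[OF A B V_adm_carrier[OF \<psi>]] ..
  ultimately show ?thesis using \<psi> by (simp add: V_adm_def admissible_def Let_def)
qed

section \<open>Local unitary invariance of the cones\<close>

lemma Ad_kron_index:
  assumes A: "A \<in> carrier_mat n n" and B: "B \<in> carrier_mat m m" and C: "C \<in> carrier_mat (n*m) (n*m)"
    and pr: "p < n" "r < n" and qs: "q < m" "s < m"
  shows "Ad (kron A B) C $$ (p*m+q, r*m+s) =
    (\<Sum>c<n. \<Sum>d<n. A $$ (p,c) * cnj (A $$ (r,d)) *
      (\<Sum>x<m. \<Sum>y<m. B $$ (q,x) * cnj (B $$ (s,y)) * C $$ (c*m+x, d*m+y)))"
proof -
  let ?T = "kron A B"
  have "Ad ?T C $$ (p*m+q, r*m+s) =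
    (\<Sum>c<n. \<Sum>x<m. \<Sum>d<n. \<Sum>y<m. ?T $$ (p*m+q, c*m+x) * C $$ (c*m+x, d*m+y) * cnj (?T $$ (r*m+s, d*m+y)))"
    using Ad_index[OF kron_carrier_mat[OF A B] C] pr qs by (simp add: block_index_less sum_lessThan_mult)
  also have "\<dots> = (\<Sum>c<n. \<Sum>x<m. \<Sum>d<n. \<Sum>y<m. A $$ (p,c) * B $$ (q,x) * C $$ (c*m+x, d*m+y) *
      cnj (A $$ (r,d) * B $$ (s,y)))"
    using pr qs by (intro sum.cong refl) (simp add: kron_index[OF A B])
  also have "\<dots> = (\<Sum>c<n. \<Sum>x<m. \<Sum>d<n. \<Sum>y<m. A $$ (p,c) * cnj (A $$ (r,d)) *
      (B $$ (q,x) * cnj (B $$ (s,y)) * C $$ (c*m+x, d*m+y)))"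
    by (simp add: mult_ac)
  also have "\<dots> = (\<Sum>c<n. \<Sum>d<n. \<Sum>x<m. \<Sum>y<m. A $$ (p,c) * cnj (A $$ (r,d)) *
      (B $$ (q,x) * cnj (B $$ (s,y)) * C $$ (c*m+x, d*m+y)))"
    by (intro sum.cong refl sum.swap)
  finally show ?thesis by (simp add: sum_distrib_left)
qed

lemma Ad_one_kron_index:
  assumes "B \<in> carrier_mat m m" and "C \<in> carrier_mat (n*m) (n*m)"
    and "p < n" "r < n" and "q < m" "s < m"
  shows "Ad (kron (1\<^sub>m n) B) C $$ (p*m+q, r*m+s) =
    (\<Sum>x<m. \<Sum>y<m. B $$ (q,x) * cnj (B $$ (s,y)) * C $$ (p*m+x, r*m+y))"
  unfolding Ad_kron_index[OF one_carrier_mat assms] sum2_one_mat_index[OF assms(3,4)] ..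

lemma Ad_kron_one_index:
  assumes "A \<in> carrier_mat n n" and "C \<in> carrier_mat (n*m) (n*m)"
    and "p < n" "r < n" and "q < m" "s < m"
  shows "Ad (kron A (1\<^sub>m m)) C $$ (p*m+q, r*m+s) =
    (\<Sum>c<n. \<Sum>d<n. A $$ (p,c) * cnj (A $$ (r,d)) * C $$ (c*m+q, d*m+s))"
  unfolding Ad_kron_index[OF assms(1) one_carrier_mat assms(2-)] sum2_one_mat_index[OF assms(5,6)] ..

lemma Ad_cadj_Ad:
  assumes "unitary_mat N T" and W: "W \<in> carrier_mat N N"
  shows "Ad (cadj T) (Ad T W) = W"
proof -
  have T: "T \<in> carrier_mat N N" and cT: "cadj T \<in> carrier_mat N N" and "cadj T * T = 1\<^sub>m N"
    using assms(1) by (auto simp: unitary_mat_def cadj_carrier_mat)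
  have "Ad (cadj T) (Ad T W) = (cadj T * T) * W * (cadj T * T)"
    using T cT W by (simp add: Ad_def assoc_mult_mat[of _ N N _ N _ N])
  also have "\<dots> = W"
    using W \<open>cadj T * T = 1\<^sub>m N\<close> by simp
  finally show ?thesis .
qed

definition local_unitary_invariant :: "nat \<Rightarrow> nat \<Rightarrow> complex mat set \<Rightarrow> bool" where
  "local_unitary_invariant n m S \<longleftrightarrow>
     (\<forall>A B W. unitary_mat n A \<longrightarrow> unitary_mat m B \<longrightarrow> W \<in> S \<longrightarrow> Ad (kron A B) W \<in> S)"

lemma Ad_kron_mem_iff:
  assumes S: "local_unitary_invariant n m S"
    and A: "unitary_mat n A" and B: "unitary_mat m B" and W: "W \<in> carrier_mat (n*m) (n*m)"
  shows "Ad (kron A B) W \<in> S \<longleftrightarrow> W \<in> S"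
proof
  assume "Ad (kron A B) W \<in> S"
  then have "Ad (kron (cadj A) (cadj B)) (Ad (kron A B) W) \<in> S"
    using S unitary_cadj[OF A] unitary_cadj[OF B] by (simp add: local_unitary_invariant_def)
  then show "W \<in> S"
    by (simp only: flip: cadj_kron) (simp add: Ad_cadj_Ad[OF unitary_kron[OF A B] W])
qed (use S A B in \<open>simp add: local_unitary_invariant_def\<close>)

lemma local_unitary_invariant_BP: "local_unitary_invariant n m (BP n m \<alpha>)"
  unfolding local_unitary_invariant_def
proof (intro allI impI)
  fix A B W assume A: "unitary_mat n A" and B: "unitary_mat m B" and W: "W \<in> BP n m \<alpha>"
  let ?T = "kron A B"
  have T: "?T \<in> carrier_mat (n*m) (n*m)" and cT: "cadj ?T \<in> carrier_mat (n*m) (n*m)"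
    using unitary_kron[OF A B] by (auto simp: unitary_mat_def cadj_carrier_mat)
  have "hermitian_mat (n*m) W" and Wc: "W \<in> carrier_mat (n*m) (n*m)"
    using W by (auto simp: BP_def hermitian_mat_def)
  have "hermitian_mat (n*m) (Ad ?T W)"
    using hermitian_mat_Ad[OF \<open>hermitian_mat (n*m) W\<close> T] .
  moreover have "Re (cinner \<psi> (Ad ?T W *\<^sub>v \<psi>)) \<ge> 0" if \<psi>: "\<psi> \<in> V_adm n m \<alpha>" for \<psi>
  proof -
    have \<psi>c: "\<psi> \<in> carrier_vec (n*m)" using \<psi> by (rule V_adm_carrier)
    have adm: "cadj ?T *\<^sub>v \<psi> \<in> V_adm n m \<alpha>"
      unfolding cadj_kron using V_adm_kron_mult_vec[OF unitary_cadj[OF A] unitary_cadj[OF B] \<psi>] .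
    have "Ad ?T W *\<^sub>v \<psi> = (?T * W) *\<^sub>v (cadj ?T *\<^sub>v \<psi>)"
      unfolding Ad_def by (rule assoc_mult_mat_vec[OF mult_carrier_mat[OF T Wc] cT \<psi>c])
    also have "\<dots> = ?T *\<^sub>v (W *\<^sub>v (cadj ?T *\<^sub>v \<psi>))"
      by (rule assoc_mult_mat_vec[OF T Wc mult_mat_vec_carrier[OF cT \<psi>c]])
    finally have "cinner \<psi> (Ad ?T W *\<^sub>v \<psi>) = cinner (cadj ?T *\<^sub>v \<psi>) (W *\<^sub>v (cadj ?T *\<^sub>v \<psi>))"
      using cinner_mult_mat_vec[OF T \<psi>c, of "W *\<^sub>v (cadj ?T *\<^sub>v \<psi>)"] cT Wc \<psi>c by simp
    with adm W show ?thesis by (simp add: BP_def)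
  qed
  ultimately show "Ad ?T W \<in> BP n m \<alpha>" by (simp add: BP_def)
qed

lemma outer_carrier_mat: "v \<in> carrier_vec M \<Longrightarrow> w \<in> carrier_vec N \<Longrightarrow> outer v w \<in> carrier_mat M N"
  by (simp add: outer_def)

lemma Ad_outer:
  assumes T: "T \<in> carrier_mat M N" and v: "v \<in> carrier_vec N"
  shows "Ad T (outer v v) = outer (T *\<^sub>v v) (T *\<^sub>v v)"
proof (rule eq_matI)
  fix i j assume "i < dim_row (outer (T *\<^sub>v v) (T *\<^sub>v v))" "j < dim_col (outer (T *\<^sub>v v) (T *\<^sub>v v))"
  then have i: "i < M" and j: "j < M" using T by (simp_all add: outer_def)
  have "Ad T (outer v v) $$ (i,j) = (\<Sum>x<N. \<Sum>y<N. T $$ (i,x) * (v $ x * cnj (v $ y)) * cnj (T $$ (j,y)))"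
    using Ad_index[OF T outer_carrier_mat[OF v v] i j] v by (simp add: outer_def)
  also have "\<dots> = (\<Sum>x<N. T $$ (i,x) * v $ x) * cnj (\<Sum>y<N. T $$ (j,y) * v $ y)"
    by (simp add: sum_product cnj_sum mult_ac)
  also have "\<dots> = outer (T *\<^sub>v v) (T *\<^sub>v v) $$ (i,j)"
    using i j T v by (simp add: outer_def scalar_prod_def atLeast0LessThan)
  finally show "Ad T (outer v v) $$ (i,j) = outer (T *\<^sub>v v) (T *\<^sub>v v) $$ (i,j)" .
qed (use T v in \<open>simp_all add: Ad_def outer_def\<close>)

lemma cone_gen_Ad_kron:
  assumes A: "unitary_mat n A" and B: "unitary_mat m B" and X: "X \<in> cone_gen n m \<alpha>"
  shows "Ad (kron A B) X \<in> cone_gen n m \<alpha>"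
proof -
  let ?T = "kron A B" and ?N = "n*m"
  have T: "?T \<in> carrier_mat ?N ?N" using unitary_kron[OF A B] by (rule unitary_mat_carrier)
  obtain K :: nat and c :: "nat \<Rightarrow> real" and \<psi>s where adm: "\<forall>l<K. c l \<ge> 0 \<and> \<psi>s l \<in> V_adm n m \<alpha>"
    and X_eq: "X = mat ?N ?N (\<lambda>(a,b). \<Sum>l<K. of_real (c l) * outer (\<psi>s l) (\<psi>s l) $$ (a,b))"
    using X unfolding cone_gen_def by blast
  let ?O = "\<lambda>l. outer (\<psi>s l) (\<psi>s l)"
  let ?Y = "mat ?N ?N (\<lambda>(a,b). \<Sum>l<K. of_real (c l) * outer (?T *\<^sub>v \<psi>s l) (?T *\<^sub>v \<psi>s l) $$ (a,b))"
  have \<psi>c: "\<psi>s l \<in> carrier_vec ?N" if "l < K" for l using adm that V_adm_carrier by blast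
  have "Ad ?T X = ?Y"
  proof (rule eq_matI)
    fix i j assume "i < dim_row ?Y" "j < dim_col ?Y"
    then have i: "i < ?N" and j: "j < ?N" by simp_all
    have "Ad ?T X $$ (i,j) =
      (\<Sum>x<?N. \<Sum>y<?N. \<Sum>l<K. of_real (c l) * (?T $$ (i,x) * ?O l $$ (x,y) * cnj (?T $$ (j,y))))"
      using Ad_index[OF T _ i j] by (simp add: X_eq sum_distrib_left sum_distrib_right mult_ac)
    also have "\<dots> = (\<Sum>x<?N. \<Sum>l<K. \<Sum>y<?N. of_real (c l) * (?T $$ (i,x) * ?O l $$ (x,y) * cnj (?T $$ (j,y))))"
      by (intro sum.cong refl sum.swap)
    also have "\<dots> = (\<Sum>l<K. \<Sum>x<?N. \<Sum>y<?N. of_real (c l) * (?T $$ (i,x) * ?O l $$ (x,y) * cnj (?T $$ (j,y))))"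
      by (rule sum.swap)
    also have "\<dots> = (\<Sum>l<K. of_real (c l) * Ad ?T (?O l) $$ (i,j))"
      using Ad_index[OF T outer_carrier_mat[OF \<psi>c \<psi>c] i j]
      by (intro sum.cong refl) (simp add: sum_distrib_left)
    also have "\<dots> = ?Y $$ (i,j)"
      using Ad_outer[OF T \<psi>c] i j by simp
    finally show "Ad ?T X $$ (i,j) = ?Y $$ (i,j)" .
  qed (use A B in \<open>auto simp: Ad_def X_eq unitary_mat_def\<close>)
  moreover have "\<forall>l<K. c l \<ge> 0 \<and> ?T *\<^sub>v \<psi>s l \<in> V_adm n m \<alpha>"
    using adm V_adm_kron_mult_vec[OF A B] by blast
  ultimately show ?thesis
    unfolding cone_gen_def mem_Collect_eq
    by (intro exI[of _ K] exI[of _ c] exI[of _ "\<lambda>l. ?T *\<^sub>v \<psi>s l"] conjI)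
qed

lemma Ad_index_diff_le:
  assumes T: "T \<in> carrier_mat N N" and X: "X \<in> carrier_mat N N" and W: "W \<in> carrier_mat N N"
    and close: "\<And>x y. x < N \<Longrightarrow> y < N \<Longrightarrow> cmod (X $$ (x,y) - W $$ (x,y)) \<le> \<delta>"
    and i: "i < N" and j: "j < N"
  shows "cmod (Ad T X $$ (i,j) - Ad T W $$ (i,j)) \<le> (\<Sum>a<N. \<Sum>x<N. cmod (T $$ (a,x)))\<^sup>2 * \<delta>"
proof -
  let ?S = "\<Sum>a<N. \<Sum>x<N. cmod (T $$ (a,x))"
  have row_le: "(\<Sum>x<N. cmod (T $$ (a,x))) \<le> ?S" if "a < N" for a
    using that by (intro member_le_sum[where f = "\<lambda>a. \<Sum>x<N. cmod (T $$ (a,x))"]) (auto intro: sum_nonneg)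
  have "\<delta> \<ge> 0" using close[of 0 0] i by (auto intro: order_trans[OF norm_ge_zero])
  have "cmod (Ad T X $$ (i,j) - Ad T W $$ (i,j))
      = cmod (\<Sum>x<N. \<Sum>y<N. T $$ (i,x) * (X $$ (x,y) - W $$ (x,y)) * cnj (T $$ (j,y)))"
    unfolding Ad_index[OF T X i j] Ad_index[OF T W i j]
    by (simp add: sum_subtractf[symmetric] algebra_simps)
  also have "\<dots> \<le> (\<Sum>x<N. \<Sum>y<N. cmod (T $$ (i,x)) * \<delta> * cmod (T $$ (j,y)))"
    using close \<open>\<delta> \<ge> 0\<close>
    by (intro order_trans[OF norm_sum sum_mono] order_trans[OF norm_sum sum_mono])
      (simp add: norm_mult mult_left_mono mult_right_mono)
  also have "\<dots> = (\<Sum>x<N. cmod (T $$ (i,x))) * (\<Sum>y<N. cmod (T $$ (j,y))) * \<delta>"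
    unfolding sum_product by (simp add: sum_distrib_left sum_distrib_right mult_ac)
  also have "\<dots> \<le> ?S * ?S * \<delta>"
    using row_le[OF i] row_le[OF j] \<open>\<delta> \<ge> 0\<close> by (intro mult_right_mono mult_mono) (auto intro!: sum_nonneg)
  finally show ?thesis by (simp add: power2_eq_square)
qed

lemma local_unitary_invariant_K_cone: "local_unitary_invariant n m (K_cone n m \<alpha>)"
  unfolding local_unitary_invariant_def
proof (intro allI impI)
  fix A B W assume A: "unitary_mat n A" and B: "unitary_mat m B" and W: "W \<in> K_cone n m \<alpha>"
  let ?T = "kron A B" and ?N = "n*m"
  let ?S = "\<Sum>a<?N. \<Sum>x<?N. cmod (?T $$ (a,x))"
  have T: "?T \<in> carrier_mat ?N ?N" using unitary_kron[OF A B] by (rule unitary_mat_carrier)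
  have Wc: "W \<in> carrier_mat ?N ?N" using W by (simp add: K_cone_def)
  have "\<exists>Y \<in> cone_gen n m \<alpha>. \<forall>a < ?N. \<forall>b < ?N. cmod (Y $$ (a,b) - Ad ?T W $$ (a,b)) < \<epsilon>"
    if "\<epsilon> > 0" for \<epsilon>
  proof -
    have "?S\<^sup>2 + 1 > 0" by (rule add_nonneg_pos) simp_all
    define \<delta> where "\<delta> = \<epsilon> / (?S\<^sup>2 + 1)"
    have "\<delta> > 0" using \<open>\<epsilon> > 0\<close> \<open>?S\<^sup>2 + 1 > 0\<close> by (simp add: \<delta>_def)
    then obtain X where X: "X \<in> cone_gen n m \<alpha>"
      and close: "\<forall>a < ?N. \<forall>b < ?N. cmod (X $$ (a,b) - W $$ (a,b)) < \<delta>"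
      using W unfolding K_cone_def by blast
    have Xc: "X \<in> carrier_mat ?N ?N" using X by (auto simp: cone_gen_def)
    have "cmod (Ad ?T X $$ (a,b) - Ad ?T W $$ (a,b)) < \<epsilon>" if "a < ?N" "b < ?N" for a b
    proof -
      have "cmod (Ad ?T X $$ (a,b) - Ad ?T W $$ (a,b)) \<le> ?S\<^sup>2 * \<delta>"
        using close that by (intro Ad_index_diff_le[OF T Xc Wc]) (auto intro: less_imp_le)
      also have "\<dots> < (?S\<^sup>2 + 1) * \<delta>"
        using \<open>\<delta> > 0\<close> by (intro mult_strict_right_mono) simp_all
      also have "\<dots> = \<epsilon>"
        using \<open>?S\<^sup>2 + 1 > 0\<close> by (simp add: \<delta>_def)
      finally show ?thesis .
    qed
    then show ?thesis using cone_gen_Ad_kron[OF A B X] by blast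
  qed
  moreover have "Ad ?T W \<in> carrier_mat ?N ?N" using T by (rule Ad_carrier_mat)
  ultimately show "Ad ?T W \<in> K_cone n m \<alpha>" by (simp add: K_cone_def)
qed

section \<open>Choi matrices\<close>

lemma matunit_carrier_mat: "matunit n i j \<in> carrier_mat n n"
  by (simp add: matunit_def)

lemma matunit_index: "a < n \<Longrightarrow> b < n \<Longrightarrow> matunit n i j $$ (a,b) = (if a = i \<and> b = j then 1 else 0)"
  by (simp add: matunit_def)

lemma Ad_matunit_index:
  assumes "G \<in> carrier_mat N n" and "i < n" "j < n" and "p < N" "r < N"
  shows "Ad G (matunit n i j) $$ (p,r) = G $$ (p,i) * cnj (G $$ (r,j))"
proof -
  have "Ad G (matunit n i j) $$ (p,r) =
      (\<Sum>x<n. \<Sum>y<n. G $$ (p,x) * matunit n i j $$ (x,y) * cnj (G $$ (r,y)))"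
    by (rule Ad_index[OF assms(1) matunit_carrier_mat assms(4,5)])
  also have "\<dots> = G $$ (p,i) * cnj (G $$ (r,j))"
    using assms by (simp add: matunit_index sum2_delta
        if_distrib[of "\<lambda>z. _ * z"] if_distrib[of "\<lambda>z. z * _"] cong: if_cong)
  finally show ?thesis .
qed

lemma hermitian_preserving_Ad_comp:
  assumes "hermitian_preserving n m \<Phi>" and "U \<in> carrier_mat m m" and "V \<in> carrier_mat n n"
  shows "hermitian_preserving n m (\<lambda>X. Ad U (\<Phi> (Ad V X)))"
  using assms unfolding hermitian_preserving_def by (blast intro: hermitian_mat_Ad)

lemma linear_map_carrier_mat: "linear_map n m \<Phi> \<Longrightarrow> A \<in> carrier_mat n n \<Longrightarrow> \<Phi> A \<in> carrier_mat m m"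
  by (simp add: linear_map_def)

lemma linear_map_restrict:
  assumes L: "linear_map n m \<Phi>" and "finite S"
  shows "\<Phi> (mat n n (\<lambda>p. if p \<in> S then A $$ p else 0)) =
    mat m m (\<lambda>xy. \<Sum>p\<in>S. A $$ p * \<Phi> (matunit n (fst p) (snd p)) $$ xy)"
  using \<open>finite S\<close>
proof (induction S rule: finite_induct)
  case empty
  have "\<Phi> (mat n n (\<lambda>p. if p \<in> {} then A $$ p else 0)) = \<Phi> (0 \<cdot>\<^sub>m 0\<^sub>m n n)"
    by (intro arg_cong[where f = \<Phi>] eq_matI) auto
  also have "\<dots> = 0 \<cdot>\<^sub>m \<Phi> (0\<^sub>m n n)" using L zero_carrier_mat unfolding linear_map_def by blast
  finally show ?case
    using linear_map_carrier_mat[OF L zero_carrier_mat] by (auto intro!: eq_matI)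
next
  case (insert q S)
  let ?E = "matunit n (fst q) (snd q)" and ?R = "mat n n (\<lambda>p. if p \<in> S then A $$ p else 0)"
  have E: "\<Phi> ?E \<in> carrier_mat m m" using L matunit_carrier_mat by (rule linear_map_carrier_mat)
  have "mat n n (\<lambda>p. if p \<in> insert q S then A $$ p else 0) = A $$ q \<cdot>\<^sub>m ?E + ?R"
    using insert.hyps by (intro eq_matI) (auto simp: matunit_def)
  then have "\<Phi> (mat n n (\<lambda>p. if p \<in> insert q S then A $$ p else 0)) = A $$ q \<cdot>\<^sub>m \<Phi> ?E + \<Phi> ?R"
    using L by (simp add: linear_map_def matunit_carrier_mat)
  also have "\<dots> = mat m m (\<lambda>xy. \<Sum>p\<in>insert q S. A $$ p * \<Phi> (matunit n (fst p) (snd p)) $$ xy)"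
    unfolding insert.IH using E insert.hyps by (intro eq_matI) simp_all
  finally show ?case .
qed

lemma linear_map_index:
  assumes L: "linear_map n m \<Phi>" and A: "A \<in> carrier_mat n n" and "x < m" "y < m"
  shows "\<Phi> A $$ (x,y) = (\<Sum>c<n. \<Sum>d<n. A $$ (c,d) * \<Phi> (matunit n c d) $$ (x,y))"
proof -
  have "A = mat n n (\<lambda>p. if p \<in> {..<n} \<times> {..<n} then A $$ p else 0)"
    using A by (auto intro!: eq_matI)
  then have "\<Phi> A $$ (x,y) = \<Phi> (mat n n (\<lambda>p. if p \<in> {..<n} \<times> {..<n} then A $$ p else 0)) $$ (x,y)"
    by (simp only: flip: \<open>A = _\<close>)
  also have "\<dots> = (\<Sum>p\<in>{..<n} \<times> {..<n}. A $$ p * \<Phi> (matunit n (fst p) (snd p)) $$ (x,y))"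
    using \<open>x < m\<close> \<open>y < m\<close> by (simp add: linear_map_restrict[OF L])
  also have "\<dots> = (\<Sum>c<n. \<Sum>d<n. A $$ (c,d) * \<Phi> (matunit n c d) $$ (x,y))"
    by (simp add: sum.cartesian_product case_prod_beta)
  finally show ?thesis .
qed

lemma gen_choi_carrier_mat: "gen_choi n m E \<Phi> \<in> carrier_mat (n*m) (n*m)"
  by (simp add: gen_choi_def)

lemma choi_carrier_mat: "choi n m \<Phi> \<in> carrier_mat (n*m) (n*m)"
  by (simp add: choi_def gen_choi_carrier_mat)

lemma gen_choi_cong:
  "(\<And>i j. i < n \<Longrightarrow> j < n \<Longrightarrow> E i j = E' i j) \<Longrightarrow> gen_choi n m E \<Phi> = gen_choi n m E' \<Phi>"
  by (simp add: gen_choi_def)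

lemma gen_choi_index:
  assumes "\<And>i j. i < n \<Longrightarrow> j < n \<Longrightarrow> E i j \<in> carrier_mat n n"
    and "\<And>i j. i < n \<Longrightarrow> j < n \<Longrightarrow> \<Phi> (E i j) \<in> carrier_mat m m"
    and "p < n" "r < n" and "q < m" "s < m"
  shows "gen_choi n m E \<Phi> $$ (p*m+q, r*m+s) = (\<Sum>i<n. \<Sum>j<n. E i j $$ (p,r) * \<Phi> (E i j) $$ (q,s))"
proof -
  have "gen_choi n m E \<Phi> $$ (p*m+q, r*m+s) = (\<Sum>i<n. \<Sum>j<n. kron (E i j) (\<Phi> (E i j)) $$ (p*m+q, r*m+s))"
    using assms(3-) by (simp add: gen_choi_def block_index_less)
  also have "\<dots> = (\<Sum>i<n. \<Sum>j<n. E i j $$ (p,r) * \<Phi> (E i j) $$ (q,s))"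
  proof (intro sum.cong refl)
    fix i j assume "i \<in> {..<n}" "j \<in> {..<n}"
    then show "kron (E i j) (\<Phi> (E i j)) $$ (p*m+q, r*m+s) = E i j $$ (p,r) * \<Phi> (E i j) $$ (q,s)"
      using kron_index[OF assms(1,2)[of i j] assms(3-)] by simp
  qed
  finally show ?thesis .
qed

lemma choi_index:
  assumes "\<And>A. A \<in> carrier_mat n n \<Longrightarrow> \<Phi> A \<in> carrier_mat m m"
    and "p < n" "r < n" and "q < m" "s < m"
  shows "choi n m \<Phi> $$ (p*m+q, r*m+s) = \<Phi> (matunit n p r) $$ (q,s)"
proof -
  have "choi n m \<Phi> $$ (p*m+q, r*m+s) = (\<Sum>i<n. \<Sum>j<n. matunit n i j $$ (p,r) * \<Phi> (matunit n i j) $$ (q,s))"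
    unfolding choi_def using assms by (intro gen_choi_index) (simp_all add: matunit_carrier_mat)
  also have "\<dots> = \<Phi> (matunit n p r) $$ (q,s)"
    using assms(2,3) by (simp add: matunit_index sum2_delta if_distrib[of "\<lambda>z. z * _"] cong: if_cong)
  finally show ?thesis .
qed

lemma choi_Ad_comp:
  assumes \<Phi>: "\<And>A. A \<in> carrier_mat n n \<Longrightarrow> \<Phi> A \<in> carrier_mat m m" and U: "U \<in> carrier_mat m m"
  shows "choi n m (\<lambda>X. Ad U (\<Phi> X)) = Ad (kron (1\<^sub>m n) U) (choi n m \<Phi>)"
proof (rule eq_mat_blockI)
  fix p q r s assume pr: "p < n" "r < n" and qs: "q < m" "s < m"
  have "choi n m (\<lambda>X. Ad U (\<Phi> X)) $$ (p*m+q, r*m+s) = Ad U (\<Phi> (matunit n p r)) $$ (q,s)"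
    using pr qs U by (intro choi_index) (simp_all add: Ad_carrier_mat)
  also have "\<dots> = (\<Sum>x<m. \<Sum>y<m. U $$ (q,x) * \<Phi> (matunit n p r) $$ (x,y) * cnj (U $$ (s,y)))"
    by (rule Ad_index[OF U \<Phi>[OF matunit_carrier_mat] qs])
  also have "\<dots> = (\<Sum>x<m. \<Sum>y<m. U $$ (q,x) * cnj (U $$ (s,y)) * choi n m \<Phi> $$ (p*m+x, r*m+y))"
    by (intro sum.cong refl) (subst choi_index[OF \<Phi> pr]; simp add: mult_ac)
  also have "\<dots> = Ad (kron (1\<^sub>m n) U) (choi n m \<Phi>) $$ (p*m+q, r*m+s)"
    by (rule Ad_one_kron_index[OF U choi_carrier_mat pr qs, symmetric])
  finally show "choi n m (\<lambda>X. Ad U (\<Phi> X)) $$ (p*m+q, r*m+s) =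
      Ad (kron (1\<^sub>m n) U) (choi n m \<Phi>) $$ (p*m+q, r*m+s)" .
qed (use U in \<open>auto intro!: choi_carrier_mat Ad_carrier_mat kron_carrier_mat\<close>)

lemma choi_comp_Ad:
  assumes L: "linear_map n m \<Phi>" and V: "V \<in> carrier_mat n n"
  shows "choi n m (\<lambda>X. \<Phi> (Ad V X)) = Ad (kron (transpose_mat V) (1\<^sub>m m)) (choi n m \<Phi>)"
proof (rule eq_mat_blockI)
  fix p q r s assume pr: "p < n" "r < n" and qs: "q < m" "s < m"
  have "choi n m (\<lambda>X. \<Phi> (Ad V X)) $$ (p*m+q, r*m+s) = \<Phi> (Ad V (matunit n p r)) $$ (q,s)"
    using pr qs by (intro choi_index linear_map_carrier_mat[OF L] Ad_carrier_mat[OF V])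
  also have "\<dots> = (\<Sum>c<n. \<Sum>d<n. Ad V (matunit n p r) $$ (c,d) * \<Phi> (matunit n c d) $$ (q,s))"
    by (rule linear_map_index[OF L Ad_carrier_mat[OF V] qs])
  also have "\<dots> = (\<Sum>c<n. \<Sum>d<n. transpose_mat V $$ (p,c) * cnj (transpose_mat V $$ (r,d)) *
      choi n m \<Phi> $$ (c*m+q, d*m+s))"
    using V pr qs by (intro sum.cong refl)
      (simp add: Ad_matunit_index choi_index[OF linear_map_carrier_mat[OF L]])
  also have "\<dots> = Ad (kron (transpose_mat V) (1\<^sub>m m)) (choi n m \<Phi>) $$ (p*m+q, r*m+s)"
    using V by (intro Ad_kron_one_index[OF _ choi_carrier_mat pr qs, symmetric]) simp
  finally show "choi n m (\<lambda>X. \<Phi> (Ad V X)) $$ (p*m+q, r*m+s) =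
      Ad (kron (transpose_mat V) (1\<^sub>m m)) (choi n m \<Phi>) $$ (p*m+q, r*m+s)" .
qed (use V in \<open>auto intro!: choi_carrier_mat Ad_carrier_mat kron_carrier_mat\<close>)

lemma gen_choi_Ad_matunit:
  assumes \<Phi>: "\<And>A. A \<in> carrier_mat n n \<Longrightarrow> \<Phi> A \<in> carrier_mat m m" and G: "G \<in> carrier_mat n n"
  shows "gen_choi n m (\<lambda>i j. Ad G (matunit n i j)) \<Phi> =
    Ad (kron G (1\<^sub>m m)) (choi n m (\<lambda>X. \<Phi> (Ad G X)))"
proof (rule eq_mat_blockI)
  fix p q r s assume pr: "p < n" "r < n" and qs: "q < m" "s < m"
  have "gen_choi n m (\<lambda>i j. Ad G (matunit n i j)) \<Phi> $$ (p*m+q, r*m+s) =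
      (\<Sum>i<n. \<Sum>j<n. Ad G (matunit n i j) $$ (p,r) * \<Phi> (Ad G (matunit n i j)) $$ (q,s))"
    using pr qs G by (intro gen_choi_index \<Phi>) (simp_all add: Ad_carrier_mat)
  also have "\<dots> = (\<Sum>i<n. \<Sum>j<n. G $$ (p,i) * cnj (G $$ (r,j)) *
      choi n m (\<lambda>X. \<Phi> (Ad G X)) $$ (i*m+q, j*m+s))"
    using G pr qs by (intro sum.cong refl) (simp add: Ad_matunit_index choi_index \<Phi> Ad_carrier_mat)
  also have "\<dots> = Ad (kron G (1\<^sub>m m)) (choi n m (\<lambda>X. \<Phi> (Ad G X))) $$ (p*m+q, r*m+s)"
    by (rule Ad_kron_one_index[OF G choi_carrier_mat pr qs, symmetric])
  finally show "gen_choi n m (\<lambda>i j. Ad G (matunit n i j)) \<Phi> $$ (p*m+q, r*m+s) =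
      Ad (kron G (1\<^sub>m m)) (choi n m (\<lambda>X. \<Phi> (Ad G X))) $$ (p*m+q, r*m+s)" .
qed (use G in \<open>auto intro!: gen_choi_carrier_mat Ad_carrier_mat kron_carrier_mat\<close>)

lemma outer_eq_Ad_matunit:
  assumes v: "\<forall>k<n. v k \<in> carrier_vec n" and ij: "i < n" "j < n"
  shows "outer (v i) (v j) = Ad (mat n n (\<lambda>(a,b). v b $ a)) (matunit n i j)"
proof -
  let ?G = "mat n n (\<lambda>(a,b). v b $ a)"
  have G: "?G \<in> carrier_mat n n" by simp
  have "v i \<in> carrier_vec n" "v j \<in> carrier_vec n" using v ij by simp_all
  then show ?thesis
    using Ad_carrier_mat[OF G, of "matunit n i j"] ij
    by (intro eq_matI) (auto simp: outer_def Ad_matunit_index[OF G])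
qed

lemma unitary_mat_of_orthonormal:
  assumes v: "\<forall>i<n. v i \<in> carrier_vec n"
    and orth: "\<forall>i<n. \<forall>j<n. cinner (v i) (v j) = (if i = j then 1 else 0)"
  shows "unitary_mat n (mat n n (\<lambda>(a,b). v b $ a))"
proof -
  let ?G = "mat n n (\<lambda>(a,b). v b $ a)"
  have G: "?G \<in> carrier_mat n n" and cG: "cadj ?G \<in> carrier_mat n n"
    by (simp_all add: cadj_carrier_mat)
  have "cadj ?G * ?G = 1\<^sub>m n"
  proof (rule eq_matI)
    fix i j assume "i < dim_row (1\<^sub>m n)" "j < dim_col (1\<^sub>m n)"
    then have "i < n" "j < n" by simp_all
    moreover from this have "cinner (v i) (v j) = (if i = j then 1 else 0)" "dim_vec (v j) = n"
      using orth v by simp_all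
    ultimately show "(cadj ?G * ?G) $$ (i,j) = 1\<^sub>m n $$ (i,j)"
      by (simp add: scalar_prod_def atLeast0LessThan cinner_def)
  qed simp_all
  moreover from this have "?G * cadj ?G = 1\<^sub>m n"
    by (rule mat_mult_left_right_inverse[OF cG G])
  ultimately show ?thesis using G by (simp add: unitary_mat_def)
qed

lemma choi_Ad_comp_Ad_mem_iff:
  assumes S: "local_unitary_invariant n m S" and L: "linear_map n m \<Phi>"
    and U: "unitary_mat m U" and V: "unitary_mat n V"
  shows "choi n m (\<lambda>X. Ad U (\<Phi> (Ad V X))) \<in> S \<longleftrightarrow> choi n m \<Phi> \<in> S"
proof -
  have Uc: "U \<in> carrier_mat m m" and Vc: "V \<in> carrier_mat n n"
    using U V by (simp_all add: unitary_mat_carrier)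
  have "choi n m (\<lambda>X. Ad U (\<Phi> (Ad V X))) =
      Ad (kron (1\<^sub>m n) U) (Ad (kron (transpose_mat V) (1\<^sub>m m)) (choi n m \<Phi>))"
    using choi_Ad_comp[OF linear_map_carrier_mat[OF L Ad_carrier_mat[OF Vc]] Uc] choi_comp_Ad[OF L Vc]
    by simp
  then show ?thesis
    using Ad_kron_mem_iff[OF S unitary_one U
        Ad_carrier_mat[OF unitary_mat_carrier[OF unitary_kron[OF unitary_transpose[OF V] unitary_one]]]]
      Ad_kron_mem_iff[OF S unitary_transpose[OF V] unitary_one choi_carrier_mat]
    by simp
qed

lemma gen_choi_orthonormal_mem_iff:
  assumes S: "local_unitary_invariant n m S" and L: "linear_map n m \<Phi>"
    and v: "\<forall>i<n. v i \<in> carrier_vec n"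
    and orth: "\<forall>i<n. \<forall>j<n. cinner (v i) (v j) = (if i = j then 1 else 0)"
  shows "gen_choi n m (\<lambda>i j. outer (v i) (v j)) \<Phi> \<in> S \<longleftrightarrow> choi n m \<Phi> \<in> S"
proof -
  define G where "G = mat n n (\<lambda>(a,b). v b $ a)"
  have G: "unitary_mat n G" unfolding G_def using v orth by (rule unitary_mat_of_orthonormal)
  have Gc: "G \<in> carrier_mat n n" by (simp add: G_def)
  have "gen_choi n m (\<lambda>i j. outer (v i) (v j)) \<Phi> =
      Ad (kron G (1\<^sub>m m)) (Ad (kron (transpose_mat G) (1\<^sub>m m)) (choi n m \<Phi>))"
    using gen_choi_cong[of n "\<lambda>i j. outer (v i) (v j)" "\<lambda>i j. Ad G (matunit n i j)"]
      outer_eq_Ad_matunit[OF v] gen_choi_Ad_matunit[OF linear_map_carrier_mat[OF L] Gc]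
      choi_comp_Ad[OF L Gc]
    by (simp add: G_def)
  then show ?thesis
    using Ad_kron_mem_iff[OF S G unitary_one
        Ad_carrier_mat[OF unitary_mat_carrier[OF unitary_kron[OF unitary_transpose[OF G] unitary_one]]]]
      Ad_kron_mem_iff[OF S unitary_transpose[OF G] unitary_one choi_carrier_mat]
    by simp
qed

theorem proposition3p11:
  fixes n m :: nat and \<alpha> :: real and \<Phi> :: "complex mat \<Rightarrow> complex mat"
  assumes "1 \<le> \<alpha>" and "\<alpha> \<le> real (min n m)"
    and "linear_map n m \<Phi>" and "hermitian_preserving n m \<Phi>"
  shows "(\<forall>U V. unitary_mat m U \<and> unitary_mat n V \<longrightarrow>
            (in_P n m \<alpha> \<Phi> \<longleftrightarrow> in_P n m \<alpha> (\<lambda>X. Ad U (\<Phi> (Ad V X)))) \<and>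
            (in_SP n m \<alpha> \<Phi> \<longleftrightarrow> in_SP n m \<alpha> (\<lambda>X. Ad U (\<Phi> (Ad V X)))))
       \<and> (\<forall>v :: nat \<Rightarrow> complex vec.
            (\<forall>i<n. v i \<in> carrier_vec n) \<and>
            (\<forall>i<n. \<forall>j<n. cinner (v i) (v j) = (if i = j then 1 else 0)) \<longrightarrow>
            (gen_choi n m (\<lambda>i j. outer (v i) (v j)) \<Phi> \<in> BP n m \<alpha> \<longleftrightarrow> choi n m \<Phi> \<in> BP n m \<alpha>) \<and>
            (gen_choi n m (\<lambda>i j. outer (v i) (v j)) \<Phi> \<in> K_cone n m \<alpha> \<longleftrightarrow> choi n m \<Phi> \<in> K_cone n m \<alpha>))"
proof (intro conjI allI impI)
  fix U V assume "unitary_mat m U \<and> unitary_mat n V"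
  then have "hermitian_preserving n m (\<lambda>X. Ad U (\<Phi> (Ad V X)))"
    and "\<And>S. local_unitary_invariant n m S \<Longrightarrow>
      choi n m (\<lambda>X. Ad U (\<Phi> (Ad V X))) \<in> S \<longleftrightarrow> choi n m \<Phi> \<in> S"
    using assms(3,4) by (simp_all add: hermitian_preserving_Ad_comp unitary_mat_carrier choi_Ad_comp_Ad_mem_iff)
  then show "in_P n m \<alpha> \<Phi> \<longleftrightarrow> in_P n m \<alpha> (\<lambda>X. Ad U (\<Phi> (Ad V X)))"
    and "in_SP n m \<alpha> \<Phi> \<longleftrightarrow> in_SP n m \<alpha> (\<lambda>X. Ad U (\<Phi> (Ad V X)))"
    using assms(4) local_unitary_invariant_BP local_unitary_invariant_K_cone
    by (simp_all add: in_P_def in_SP_def)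
next
  fix v :: "nat \<Rightarrow> complex vec"
  assume "(\<forall>i<n. v i \<in> carrier_vec n) \<and> (\<forall>i<n. \<forall>j<n. cinner (v i) (v j) = (if i = j then 1 else 0))"
  then show "gen_choi n m (\<lambda>i j. outer (v i) (v j)) \<Phi> \<in> BP n m \<alpha> \<longleftrightarrow> choi n m \<Phi> \<in> BP n m \<alpha>"
    and "gen_choi n m (\<lambda>i j. outer (v i) (v j)) \<Phi> \<in> K_cone n m \<alpha> \<longleftrightarrow> choi n m \<Phi> \<in> K_cone n m \<alpha>"
    using gen_choi_orthonormal_mem_iff[OF local_unitary_invariant_BP assms(3)]
      gen_choi_orthonormal_mem_iff[OF local_unitary_invariant_K_cone assms(3)]
    by simp_all
qed

end
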